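(* Let $\mathcal P$ and $\mathrm{conv}(\mathcal P)$ be as in the context. Let $\mathcal S\subseteq[0,\min\{L-1,T-2,\lfloor(\overline C-\overline V)/V\rfloor\}]_{\mathbb Z}$. For any $t\in[1,T]_{\mathbb Z}$ with $t\ge s+2$ for all $s\in\mathcal S$, the inequality $$x_t\le\overline C y_t-\sum_{s\in\mathcal S}(\overline C-\overline V-sV)(y_{t-s}-y_{t-s-1})$$ is valid and facet-defining for $\mathrm{conv}(\mathcal P)$. For any $t\in[1,T]_{\mathbb Z}$ with $t\le T-s-1$ for all $s\in\mathcal S$, the inequality $$x_t\le\overline C y_t-\sum_{s\in\mathcal S}(\overline C-\overline V-sV)(y_{t+s}-y_{t+s+1})$$ is valid and facet-defining for $\mathrm{conv}(\mathcal P)$.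
   Context: For integers $a,b$, $[a,b]_{\mathbb Z}=\{a,a+1,\dots,b\}$ if $a\le b$ and $\emptyset$ otherwise. Fix a positive integer $T$, positive integers $L$ (minimum up time) and $\ell$ (minimum down time), and reals $\overline C,\underline C,V,\overline V$ with $\overline C>\underline C>0$, $V>0$, $\overline V+V\le\overline C$ and $\underline C<\overline V<\underline C+V$. $\mathcal P$ is the set of $(\mathbf x,\mathbf y)=((x_1,\dots,x_T),(y_1,\dots,y_T))\in\mathbb R_+^T\times\{0,1\}^T$ satisfying: (i) $-y_{t-1}+y_t-y_k\le 0$ for all $t\in[2,T]_{\mathbb Z}$, $k\in[t,\min\{T,t+L-1\}]_{\mathbb Z}$; (ii) $y_{t-1}-y_t+y_k\le 1$ for all $t\in[2,T]_{\mathbb Z}$, $k\in[t,\min\{T,t+\ell-1\}]_{\mathbb Z}$; (iii) $-x_t+\underline C y_t\le 0$ and $x_t-\overline C y_t\le 0$ for all $t\in[1,T]_{\mathbb Z}$; (iv) $x_t-x_{t-1}\le Vy_{t-1}+\overline V(1-y_{t-1})$ for all $t\in[2,T]_{\mathbb Z}$; (v) $x_{t-1}-x_t\le Vy_t+\overline V(1-y_t)$ for all $t\in[2,T]_{\mathbb Z}$. $\mathrm{conv}(\mathcal P)\subseteq\mathbb R^{2T}$ is its convex hull. A linear inequality is valid for $\mathrm{conv}(\mathcal P)$ if all its points satisfy it, and facet-defining if moreover the set of points of $\mathrm{conv}(\mathcal P)$ satisfying it with equality has dimension $\dim\mathrm{conv}(\mathcal P)-1$. *)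

theory Defs
  imports "HOL-Analysis.Analysis" "HOL-Library.Function_Algebras"
begin

text \<open>Pointwise real vector space structure on functions nat => real, so that the
  library notions convex hull, affine hull and affine (in)dependence apply to
  points (x, y) of R^T x R^T, represented as pairs of functions nat => real that
  vanish outside the index range 1..T.\<close>

instantiation "fun" :: (type, real_vector) real_vector
begin
definition scaleR_fun :: "real \<Rightarrow> ('a \<Rightarrow> 'b) \<Rightarrow> 'a \<Rightarrow> 'b"
  where "scaleR_fun r f = (\<lambda>x. r *\<^sub>R f x)"
instance
  by standard (auto simp: scaleR_fun_def fun_eq_iff scaleR_add_right scaleR_add_left)
end

type_synonym point = "(nat \<Rightarrow> real) \<times> (nat \<Rightarrow> real)"

definition pdim :: "point set \<Rightarrow> int" where
  "pdim S = (if S = {} then -1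
     else int (GREATEST n. \<exists>B. B \<subseteq> S \<and> finite B \<and> \<not> affine_dependent B \<and> card B = n) - 1)"

definition Pset :: "nat \<Rightarrow> nat \<Rightarrow> nat \<Rightarrow> real \<Rightarrow> real \<Rightarrow> real \<Rightarrow> real \<Rightarrow> point set" where
  "Pset T L l Cu Cl V Vb = {(x, y).
     (\<forall>t. t \<notin> {1..T} \<longrightarrow> x t = 0 \<and> y t = 0) \<and>
     (\<forall>t\<in>{1..T}. x t \<ge> 0 \<and> (y t = 0 \<or> y t = 1)) \<and>
     (\<forall>t\<in>{2..T}. \<forall>k\<in>{t..min T (t + L - 1)}. - y (t-1) + y t - y k \<le> 0) \<and>
     (\<forall>t\<in>{2..T}. \<forall>k\<in>{t..min T (t + l - 1)}. y (t-1) - y t + y k \<le> 1) \<and>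
     (\<forall>t\<in>{1..T}. - x t + Cl * y t \<le> 0 \<and> x t - Cu * y t \<le> 0) \<and>
     (\<forall>t\<in>{2..T}. x t - x (t-1) \<le> V * y (t-1) + Vb * (1 - y (t-1))) \<and>
     (\<forall>t\<in>{2..T}. x (t-1) - x t \<le> V * y t + Vb * (1 - y t))}"

definition valid_ineq :: "point set \<Rightarrow> (point \<Rightarrow> real) \<Rightarrow> bool" where
  "valid_ineq K g \<longleftrightarrow> (\<forall>p\<in>K. g p \<le> 0)"

definition facet_defining :: "point set \<Rightarrow> (point \<Rightarrow> real) \<Rightarrow> bool" where
  "facet_defining K g \<longleftrightarrow> valid_ineq K g \<and> pdim {p\<in>K. g p = 0} = pdim K - 1"

end

theory Submission
  imports Defs
begin

(* If the unit starts up at time t - s with s in S, the minimum up time (s < L) keeps it on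
   until t, and ramping up from the start-up level Vb gives x_t <= Vb + s V; two such start-ups
   cannot both occur, since the earlier one keeps the unit on at the time just before the later
   one. As the coefficients Cu - Vb - s V are nonnegative, this yields validity.
   For the facet property it suffices that the points of P on the hyperplane, together with
   one point of P off it, linearly span the space containing P (and that 0 lies in P). Such points
   are trajectories that are on during a single interval touching the boundary of the horizon:
   full output, full output with a dip at one time, and ramping start-up and shut-down
   trajectories. Time reversal t -> T + 1 - t maps P onto itself and turns the start-up
   inequality for t into the shut-down inequality for T + 1 - t. *)

lemma scaleR_fun_apply [simp]: "(r *\<^sub>R f) x = r *\<^sub>R f x"
  by (simp add: scaleR_fun_def)

lemma sum_fun_apply: "(\<Sum>a\<in>A. f a) x = (\<Sum>a\<in>A. f a x)"
  by (induction A rule: infinite_finite_induct) auto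

lemma card_affine_independent_le:
  fixes A :: "'a::real_vector set"
  assumes "\<not> affine_dependent A" "finite A" "A \<subseteq> span B" "finite B"
  shows "card A \<le> card B + 1"
proof (cases "A = {}")
  case False
  then obtain a where a: "a \<in> A" by auto
  let ?D = "(\<lambda>x. - a + x) ` (A - {a})"
  have "independent ?D"
    using affine_dependent_iff_dependent2[OF a] assms(1) by simp
  moreover have "?D \<subseteq> span B"
  proof
    fix d assume "d \<in> ?D"
    then obtain x where "x \<in> A" "d = x - a" by auto
    then show "d \<in> span B"
      using assms(3) a by (auto intro: span_diff)
  qed
  ultimately have "card ?D \<le> card B"
    using independent_span_bound[OF assms(4)] by blast
  moreover have "card ?D = card A - 1"
    by (subst card_image) (auto simp: inj_on_def card_Diff_singleton a)
  ultimately show ?thesis by linarith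
qed simp

lemma pdim_eq_card_basis:
  assumes "0 \<in> K" "B \<subseteq> K" "independent B" "finite B" "K \<subseteq> span B"
  shows "pdim K = int (card B)"
proof -
  have "0 \<notin> B"
    using assms(3) dependent_zero by blast
  then have "\<not> affine_dependent (insert 0 B)"
    using affine_dependent_iff_dependent[OF \<open>0 \<notin> B\<close>] assms(3) by simp
  moreover have "card (insert 0 B) = card B + 1"
    using \<open>0 \<notin> B\<close> assms(4) by simp
  moreover have "insert 0 B \<subseteq> K" "finite (insert 0 B)"
    using assms(1,2,4) by auto
  ultimately have witness: "\<exists>A. A \<subseteq> K \<and> finite A \<and> \<not> affine_dependent A \<and> card A = card B + 1"
    by blast
  have bound: "card A \<le> card B + 1"
    if "A \<subseteq> K" "finite A" "\<not> affine_dependent A" for A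
    using card_affine_independent_le[OF that(3,2) subset_trans[OF that(1) assms(5)] assms(4)] .
  have "(GREATEST n. \<exists>A. A \<subseteq> K \<and> finite A \<and> \<not> affine_dependent A \<and> card A = n)
      = card B + 1"
    by (rule Greatest_equality) (use witness bound in blast)+
  then show ?thesis
    using assms(1) unfolding pdim_def by auto
qed

lemma valid_ineq_convex_hullI:
  assumes "linear g" "\<forall>p\<in>P. g p \<le> 0"
  shows "valid_ineq (convex hull P) g"
proof -
  have "convex hull P \<subseteq> g -` {..0}"
  proof (rule hull_minimal)
    show "P \<subseteq> g -` {..0}"
      using assms(2) by auto
    show "convex (g -` {..0})"
      by (rule convex_linear_vimage[OF assms(1)]) simp
  qed
  then show ?thesis
    unfolding valid_ineq_def by auto
qed

lemma in_span_if_in_span_insert_kernel: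
  assumes g: "linear g" "\<forall>b\<in>B. g b = 0" "g e \<noteq> 0"
    and p: "p \<in> span (insert e B)" "g p = 0"
  shows "p \<in> span B"
proof -
  obtain k where k: "p - k *\<^sub>R e \<in> span B"
    using p(1) span_breakdown_eq by blast
  have "g (p - k *\<^sub>R e) = 0"
    using linear_eq_0_on_span[OF g(1) _ k] g(2) by blast
  then have "k *\<^sub>R g e = 0"
    using p(2) linear_diff[OF g(1)] linear_scale[OF g(1)] by simp
  then show ?thesis
    using k g(3) by simp
qed

lemma pdim_hyperplane_section:
  fixes g :: "point \<Rightarrow> real"
  assumes g: "linear g" "\<forall>b\<in>B. g b = 0" "g e \<noteq> 0"
    and K: "0 \<in> K" "insert e B \<subseteq> K" "K \<subseteq> span (insert e B)"
    and B: "independent B" "finite B"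
  shows "pdim {p\<in>K. g p = 0} = pdim K - 1"
proof -
  have "e \<notin> span B"
    using linear_eq_0_on_span[OF g(1)] g(2,3) by blast
  then have "e \<notin> B"
    using span_base by blast
  have "pdim K = int (card (insert e B))"
    using K B \<open>e \<notin> span B\<close> by (intro pdim_eq_card_basis independent_insertI) simp_all
  moreover have "pdim {p\<in>K. g p = 0} = int (card B)"
  proof (rule pdim_eq_card_basis)
    show "{p\<in>K. g p = 0} \<subseteq> span B"
      using K(3) g by (auto intro: in_span_if_in_span_insert_kernel)
  qed (use K g B linear_0[OF g(1)] in auto)
  ultimately show ?thesis
    using \<open>e \<notin> B\<close> B(2) by simp
qed

lemma facet_defining_convex_hullI:
  fixes g :: "point \<Rightarrow> real"
  assumes g: "linear g" and valid: "\<forall>p\<in>P. g p \<le> 0" and "0 \<in> P"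
    and e: "e \<in> P" "g e \<noteq> 0"
    and E: "finite E" "P \<subseteq> span E"
    and spanning: "P \<subseteq> span (insert e {p\<in>P. g p = 0})"
  shows "facet_defining (convex hull P) g"
proof -
  obtain B where B: "B \<subseteq> {p\<in>P. g p = 0}" "independent B" "{p\<in>P. g p = 0} \<subseteq> span B"
    using maximal_independent_subset by blast
  have "finite B"
    using independent_span_bound[OF E(1) B(2)] B(1) E(2) by blast
  have "insert e {p\<in>P. g p = 0} \<subseteq> span (insert e B)"
    using B(3) span_mono[of B "insert e B"] span_base[of e "insert e B"] by blast
  then have "span (insert e {p\<in>P. g p = 0}) \<subseteq> span (insert e B)"
    by (rule span_minimal[OF _ subspace_span])
  with spanning have "P \<subseteq> span (insert e B)"
    by (rule subset_trans)
  then have "span P \<subseteq> span (insert e B)"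
    by (rule span_minimal[OF _ subspace_span])
  then have "convex hull P \<subseteq> span (insert e B)"
    using convex_hull_subset_span by blast
  moreover have "0 \<in> convex hull P" "insert e B \<subseteq> convex hull P"
    using \<open>0 \<in> P\<close> e(1) B(1) hull_subset[of P convex] by auto
  ultimately have "pdim {p\<in>convex hull P. g p = 0} = pdim (convex hull P) - 1"
    using B(1,2) \<open>finite B\<close> by (intro pdim_hyperplane_section[OF g _ e(2)]) auto
  with valid_ineq_convex_hullI[OF g valid] show ?thesis
    unfolding facet_defining_def by simp
qed

definition unit_x :: "nat \<Rightarrow> point" where
  "unit_x k = (indicator {k}, 0)"

definition unit_y :: "nat \<Rightarrow> point" where
  "unit_y k = (0, indicator {k})"

lemma fun_eq_sum_indicator:
  fixes f :: "nat \<Rightarrow> real"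
  assumes "finite A" "\<forall>i. i \<notin> A \<longrightarrow> f i = 0"
  shows "f = (\<Sum>k\<in>A. f k *\<^sub>R indicator {k})"
proof
  fix i
  have "(\<Sum>k\<in>A. f k *\<^sub>R indicator {k}) i = (\<Sum>k\<in>A. if k = i then f i else 0)"
    unfolding sum_fun_apply by (intro sum.cong) (auto simp: indicator_def)
  also have "\<dots> = f i"
    using assms by (simp add: sum.delta)
  finally show "f i = (\<Sum>k\<in>A. f k *\<^sub>R indicator {k}) i" ..
qed

lemma x_part_in_span:
  assumes "\<forall>i. i \<notin> {1..T} \<longrightarrow> x i = 0" "\<forall>k\<in>{1..T}. unit_x k \<in> span X"
  shows "(x, 0) \<in> span X"
proof -
  have "x = (\<Sum>k\<in>{1..T}. x k *\<^sub>R indicator {k})"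
    using assms(1) by (intro fun_eq_sum_indicator) auto
  then have "(x, 0) = (\<Sum>k\<in>{1..T}. x k *\<^sub>R unit_x k)"
    by (simp add: unit_x_def prod_eq_iff fst_sum snd_sum)
  also have "\<dots> \<in> span X"
    using assms(2) by (intro span_sum span_scale) auto
  finally show ?thesis .
qed

lemma y_part_in_span:
  assumes "\<forall>i. i \<notin> {1..T} \<longrightarrow> y i = 0" "\<forall>k\<in>{1..T}. unit_y k \<in> span X"
  shows "(0, y) \<in> span X"
proof -
  have "y = (\<Sum>k\<in>{1..T}. y k *\<^sub>R indicator {k})"
    using assms(1) by (intro fun_eq_sum_indicator) auto
  then have "(0, y) = (\<Sum>k\<in>{1..T}. y k *\<^sub>R unit_y k)"
    by (simp add: unit_y_def prod_eq_iff fst_sum snd_sum)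
  also have "\<dots> \<in> span X"
    using assms(2) by (intro span_sum span_scale) auto
  finally show ?thesis .
qed

lemma unit_y_in_span:
  assumes tails: "\<And>j. 1 \<le> j \<Longrightarrow> j \<le> Suc T \<Longrightarrow> (0, indicator {j..T}) \<in> span X"
    and k: "k \<in> {1..T}"
  shows "unit_y k \<in> span X"
proof -
  have "(0, indicator {k..T}) - (0, indicator {Suc k..T}) \<in> span X"
    by (rule span_diff[OF tails tails]) (use k in auto)
  moreover have "unit_y k = (0, indicator {k..T}) - (0, indicator {Suc k..T})"
    using k by (auto simp: unit_y_def indicator_def fun_eq_iff)
  ultimately show ?thesis
    by simp
qed

(* For binary y, constraint (i) is equivalent to this: no on-run strictly between two off-periods
   a < c with c - a <= L. Unlike (i), it is visibly invariant under time reversal; constraint (ii)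
   is the same condition for 1 - y and l. *)
definition no_short_run :: "nat \<Rightarrow> nat \<Rightarrow> (nat \<Rightarrow> real) \<Rightarrow> bool" where
  "no_short_run T L y \<longleftrightarrow>
     \<not> (\<exists>a b c. 1 \<le> a \<and> a < b \<and> b < c \<and> c \<le> T \<and> c \<le> a + L \<and> y a = 0 \<and> y b = 1 \<and> y c = 0)"

lemma min_up_stays_on:
  fixes y :: "nat \<Rightarrow> real"
  assumes binary: "\<forall>i\<in>{1..T}. y i = 0 \<or> y i = 1"
    and min_up: "\<forall>t\<in>{2..T}. \<forall>k\<in>{t..min T (t + L - 1)}. - y (t - 1) + y t - y k \<le> 0"
    and abc: "1 \<le> a" "a < b" "b \<le> c" "c \<le> T" "c \<le> a + L" "y a = 0" "y b = 1"
  shows "y c = 1"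
  using abc(2,3,7)
proof (induction b)
  case (Suc b)
  show ?case
  proof (cases "a < b \<and> y b = 1")
    case False
    then have "y b = 0"
      using binary Suc.prems abc(1,4,6) by (cases "a = b") auto
    moreover have "Suc b \<in> {2..T}" "c \<in> {Suc b..min T (Suc b + L - 1)}"
      using Suc.prems abc(1,4,5) by auto
    with min_up have "- y (Suc b - 1) + y (Suc b) - y c \<le> 0"
      by blast
    ultimately show ?thesis
      using binary Suc.prems abc(1,4) by force
  qed (use Suc in simp)
qed simp

lemma min_up_iff_no_short_run:
  fixes y :: "nat \<Rightarrow> real"
  assumes binary: "\<forall>i\<in>{1..T}. y i = 0 \<or> y i = 1"
  shows "(\<forall>t\<in>{2..T}. \<forall>k\<in>{t..min T (t + L - 1)}. - y (t - 1) + y t - y k \<le> 0)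
    \<longleftrightarrow> no_short_run T L y"
proof
  assume "\<forall>t\<in>{2..T}. \<forall>k\<in>{t..min T (t + L - 1)}. - y (t - 1) + y t - y k \<le> 0"
  from min_up_stays_on[OF binary this] show "no_short_run T L y"
    unfolding no_short_run_def by force
next
  assume no_short: "no_short_run T L y"
  show "\<forall>t\<in>{2..T}. \<forall>k\<in>{t..min T (t + L - 1)}. - y (t - 1) + y t - y k \<le> 0"
  proof (intro ballI)
    fix t k assume t: "t \<in> {2..T}" and k: "k \<in> {t..min T (t + L - 1)}"
    have "\<not> (y (t - 1) = 0 \<and> y t = 1 \<and> y k = 0)"
    proof
      assume pattern: "y (t - 1) = 0 \<and> y t = 1 \<and> y k = 0"
      then have "1 \<le> t - 1 \<and> t - 1 < t \<and> t < k \<and> k \<le> T \<and> k \<le> t - 1 + L"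
        using t k by (cases "k = t") auto
      with pattern no_short show False
        unfolding no_short_run_def by blast
    qed
    moreover have "t - 1 \<in> {1..T}" "t \<in> {1..T}" "k \<in> {1..T}"
      using t k by auto
    then have "y (t - 1) = 0 \<or> y (t - 1) = 1" "y t = 0 \<or> y t = 1" "y k = 0 \<or> y k = 1"
      using binary by blast+
    ultimately show "- y (t - 1) + y t - y k \<le> 0"
      by force
  qed
qed

lemma mem_Pset_iff:
  "(x, y) \<in> Pset T L l Cu Cl V Vb \<longleftrightarrow>
     (\<forall>t. t \<notin> {1..T} \<longrightarrow> x t = 0 \<and> y t = 0) \<and>
     (\<forall>t\<in>{1..T}. 0 \<le> x t \<and> (y t = 0 \<or> y t = 1)) \<and>
     no_short_run T L y \<and> no_short_run T l (\<lambda>i. 1 - y i) \<and>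
     (\<forall>t\<in>{1..T}. Cl * y t \<le> x t \<and> x t \<le> Cu * y t) \<and>
     (\<forall>t\<in>{2..T}. x t - x (t - 1) \<le> V * y (t - 1) + Vb * (1 - y (t - 1))) \<and>
     (\<forall>t\<in>{2..T}. x (t - 1) - x t \<le> V * y t + Vb * (1 - y t))"
proof (cases "\<forall>t\<in>{1..T}. y t = 0 \<or> y t = 1")
  case True
  then have "\<forall>t\<in>{1..T}. 1 - y t = 0 \<or> 1 - y t = 1"
    by auto
  from min_up_iff_no_short_run[OF this, of l, symmetric]
  have "no_short_run T l (\<lambda>i. 1 - y i) \<longleftrightarrow>
      (\<forall>t\<in>{2..T}. \<forall>k\<in>{t..min T (t + l - 1)}. y (t - 1) - y t + y k \<le> 1)"
    by (simp add: algebra_simps)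
  then show ?thesis
    using min_up_iff_no_short_run[OF True, of L] unfolding Pset_def by auto
next
  case False
  then show ?thesis
    unfolding Pset_def by auto
qed

definition mirror :: "nat \<Rightarrow> nat \<Rightarrow> nat" where
  "mirror T i = (if i \<in> {1..T} then Suc T - i else i)"

lemma mirror_mirror [simp]: "mirror T (mirror T i) = i"
  unfolding mirror_def by auto

lemma mirror_in_range: "i \<in> {1..T} \<Longrightarrow> mirror T i \<in> {1..T}"
  unfolding mirror_def by auto

lemma no_short_run_mirror:
  assumes "no_short_run T L y"
  shows "no_short_run T L (y \<circ> mirror T)"
  unfolding no_short_run_def
proof
  assume "\<exists>a b c. 1 \<le> a \<and> a < b \<and> b < c \<and> c \<le> T \<and> c \<le> a + L \<and>
    (y \<circ> mirror T) a = 0 \<and> (y \<circ> mirror T) b = 1 \<and> (y \<circ> mirror T) c = 0"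
  then obtain a b c where abc: "1 \<le> a" "a < b" "b < c" "c \<le> T" "c \<le> a + L"
    "y (mirror T a) = 0" "y (mirror T b) = 1" "y (mirror T c) = 0"
    by auto
  then have "1 \<le> mirror T c \<and> mirror T c < mirror T b \<and> mirror T b < mirror T a \<and>
      mirror T a \<le> T \<and> mirror T a \<le> mirror T c + L"
    by (auto simp: mirror_def)
  then show False
    using assms abc(6-8) unfolding no_short_run_def by blast
qed

definition mirror_point :: "nat \<Rightarrow> point \<Rightarrow> point" where
  "mirror_point T p = (fst p \<circ> mirror T, snd p \<circ> mirror T)"

lemma mirror_point_mirror_point [simp]: "mirror_point T (mirror_point T p) = p"
  by (simp add: mirror_point_def comp_def)

lemma linear_mirror_point: "linear (mirror_point T)"
  by (rule linearI) (auto simp: mirror_point_def)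

lemma mirror_point_in_Pset:
  assumes "p \<in> Pset T L l Cu Cl V Vb"
  shows "mirror_point T p \<in> Pset T L l Cu Cl V Vb"
proof -
  obtain x y where p: "p = (x, y)"
    by fastforce
  let ?m = "mirror T"
  have P: "(\<forall>t. t \<notin> {1..T} \<longrightarrow> x t = 0 \<and> y t = 0)"
      "\<forall>t\<in>{1..T}. 0 \<le> x t \<and> (y t = 0 \<or> y t = 1)"
      "no_short_run T L y" "no_short_run T l (\<lambda>i. 1 - y i)"
      "\<forall>t\<in>{1..T}. Cl * y t \<le> x t \<and> x t \<le> Cu * y t"
      "\<forall>t\<in>{2..T}. x t - x (t - 1) \<le> V * y (t - 1) + Vb * (1 - y (t - 1))"
      "\<forall>t\<in>{2..T}. x (t - 1) - x t \<le> V * y t + Vb * (1 - y t)"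
    using assms unfolding p mem_Pset_iff by auto
  have swap: "?m (t - 1) \<in> {2..T}" "?m (t - 1) - 1 = ?m t" if "t \<in> {2..T}" for t
    using that by (auto simp: mirror_def)
  have "\<forall>t\<in>{2..T}. x (?m t) - x (?m (t - 1)) \<le> V * y (?m (t - 1)) + Vb * (1 - y (?m (t - 1)))"
    using P(7) swap by metis
  moreover have "\<forall>t\<in>{2..T}. x (?m (t - 1)) - x (?m t) \<le> V * y (?m t) + Vb * (1 - y (?m t))"
    using P(6) swap by metis
  moreover have "no_short_run T l (\<lambda>i. 1 - (y \<circ> ?m) i)"
    using no_short_run_mirror[OF P(4)] by (simp add: comp_def)
  moreover have "\<forall>t. t \<notin> {1..T} \<longrightarrow> x (?m t) = 0 \<and> y (?m t) = 0"
    using P(1) by (simp add: mirror_def)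
  ultimately show ?thesis
    using P(2,5) no_short_run_mirror[OF P(3)] mirror_in_range
    unfolding p mirror_point_def mem_Pset_iff by auto
qed

lemma mirror_point_image_Pset: "mirror_point T ` Pset T L l Cu Cl V Vb = Pset T L l Cu Cl V Vb"
proof
  show "Pset T L l Cu Cl V Vb \<subseteq> mirror_point T ` Pset T L l Cu Cl V Vb"
  proof
    fix p assume "p \<in> Pset T L l Cu Cl V Vb"
    then show "p \<in> mirror_point T ` Pset T L l Cu Cl V Vb"
      using mirror_point_in_Pset by (intro image_eqI[of p _ "mirror_point T p"]) simp_all
  qed
qed (use mirror_point_in_Pset in blast)

definition on_block :: "nat \<Rightarrow> nat \<Rightarrow> (nat \<Rightarrow> real) \<Rightarrow> point" where
  "on_block a b f = ((\<lambda>i. if i \<in> {a..b} then f i else 0), indicator {a..b})"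

lemma no_short_run_block:
  assumes "1 \<le> a" "a = 1 \<or> b = T"
  shows "no_short_run T L (indicator {a..b})" "no_short_run T l (\<lambda>i. 1 - indicator {a..b} i)"
  using assms unfolding no_short_run_def by (auto simp: indicator_def)

lemma sum_indicator_jumps:
  fixes c :: "nat \<Rightarrow> real"
  assumes "finite S" "\<forall>s\<in>S. s + 2 \<le> t" "1 \<le> a" "a \<le> b"
  shows "(\<Sum>s\<in>S. c s * (indicator {a..b} (t - s) - indicator {a..b} (t - s - 1)))
    = (if a \<le> t \<and> t - a \<in> S then c (t - a) else 0)
      - (if b < t \<and> t - Suc b \<in> S then c (t - Suc b) else 0)"
proof -
  have "(\<Sum>s\<in>S. c s * (indicator {a..b} (t - s) - indicator {a..b} (t - s - 1)))
      = (\<Sum>s\<in>S. (if a \<le> t then (if s = t - a then c s else 0) else 0)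
          - (if b < t then (if s = t - Suc b then c s else 0) else 0))"
    using assms(2-4) by (intro sum.cong) (auto simp: indicator_def)
  also have "\<dots> = (if a \<le> t \<and> t - a \<in> S then c (t - a) else 0)
      - (if b < t \<and> t - Suc b \<in> S then c (t - Suc b) else 0)"
    using assms(1)
    by (cases "a \<le> t"; cases "b < t") (simp_all add: sum_subtractf sum_negf sum.delta)
  finally show ?thesis .
qed

locale unit_commitment =
  fixes T L l :: nat and Cu Cl V Vb :: real
  assumes T_pos: "0 < T" and Cl_pos: "0 < Cl" and Cl_less_Cu: "Cl < Cu" and Cl_le_Vb: "Cl \<le> Vb"
    and V_pos: "0 < V"
begin

abbreviation P :: "point set" where
  "P \<equiv> Pset T L l Cu Cl V Vb"

lemma zero_in_P: "0 \<in> P"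
  using Cl_pos Cl_le_Vb unfolding zero_prod_def mem_Pset_iff no_short_run_def by auto

lemma P_support: "(x, y) \<in> P \<Longrightarrow> i \<notin> {1..T} \<Longrightarrow> x i = 0 \<and> y i = 0"
  unfolding mem_Pset_iff by blast

lemma P_binary: "(x, y) \<in> P \<Longrightarrow> i \<in> {1..T} \<Longrightarrow> y i = 0 \<or> y i = 1"
  unfolding mem_Pset_iff by blast

lemma P_no_short_run: "(x, y) \<in> P \<Longrightarrow> no_short_run T L y"
  unfolding mem_Pset_iff by blast

lemma P_capacity: "(x, y) \<in> P \<Longrightarrow> i \<in> {1..T} \<Longrightarrow> x i \<le> Cu * y i"
  unfolding mem_Pset_iff by blast

lemma P_ramp_up:
  "(x, y) \<in> P \<Longrightarrow> i \<in> {2..T} \<Longrightarrow> x i - x (i - 1) \<le> V * y (i - 1) + Vb * (1 - y (i - 1))"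
  unfolding mem_Pset_iff by blast

lemma P_subset_span:
  assumes "\<forall>k\<in>{1..T}. unit_x k \<in> span X" "\<forall>k\<in>{1..T}. unit_y k \<in> span X"
  shows "P \<subseteq> span X"
proof
  fix p assume "p \<in> P"
  then obtain x y where xy: "p = (x, y)" "(x, y) \<in> P"
    by (cases p) auto
  then have "(x, 0) \<in> span X" "(0, y) \<in> span X"
    using P_support assms by (blast intro: x_part_in_span y_part_in_span)+
  then have "(x, 0) + (0, y) \<in> span X"
    by (rule span_add)
  then show "p \<in> span X"
    using xy(1) by simp
qed

lemma P_subset_span_units: "P \<subseteq> span (unit_x ` {1..T} \<union> unit_y ` {1..T})"
  by (rule P_subset_span) (auto intro: span_base)

lemma P_y_part_in_span:
  assumes "(x, y) \<in> P" "(x, y) \<in> span X" "\<forall>k\<in>{1..T}. unit_x k \<in> span X"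
  shows "(0, y) \<in> span X"
proof -
  have "(x, 0) \<in> span X"
    using P_support[OF assms(1)] assms(3) by (blast intro: x_part_in_span)
  with assms(2) have "(x, y) - (x, 0) \<in> span X"
    by (rule span_diff)
  then show ?thesis
    by simp
qed

lemma on_block_ramp_limits:
  assumes range: "\<forall>i\<in>{a..b}. Cl \<le> f i \<and> f i \<le> Cu"
    and ramp: "\<forall>i\<in>{Suc a..b}. \<bar>f i - f (i - 1)\<bar> \<le> V"
    and startup: "1 < a \<longrightarrow> f a \<le> Vb" and shutdown: "b < T \<longrightarrow> f b \<le> Vb"
    and t: "t \<in> {2..T}"
    and x: "x = (\<lambda>i. if i \<in> {a..b} then f i else 0)" and y: "y = indicator {a..b}"
  shows "x t - x (t - 1) \<le> V * y (t - 1) + Vb * (1 - y (t - 1)) \<and>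
    x (t - 1) - x t \<le> V * y t + Vb * (1 - y t)"
proof -
  consider "t - 1 \<in> {a..b}" "t \<in> {a..b}" | "t - 1 \<notin> {a..b}" "t \<in> {a..b}"
    | "t - 1 \<in> {a..b}" "t \<notin> {a..b}" | "t - 1 \<notin> {a..b}" "t \<notin> {a..b}"
    by blast
  then show ?thesis
  proof cases
    case 1
    then have "t \<in> {Suc a..b}"
      using t by auto
    then show ?thesis
      using 1 ramp unfolding x y by (auto simp: abs_le_iff)
  next
    case 2
    then have "t = a" "1 < a"
      using t by auto
    then show ?thesis
      using 2 startup range V_pos Cl_pos unfolding x y by force
  next
    case 3
    then have "t - 1 = b" "b < T"
      using t by auto
    then show ?thesis
      using 3 shutdown range V_pos Cl_pos unfolding x y by force
  next
    case 4
    then show ?thesis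
      using Cl_pos Cl_le_Vb unfolding x y by auto
  qed
qed

lemma on_block_in_P:
  assumes block: "1 \<le> a" "a \<le> b" "b \<le> T" "a = 1 \<or> b = T"
    and range: "\<forall>i\<in>{a..b}. Cl \<le> f i \<and> f i \<le> Cu"
    and ramp: "\<forall>i\<in>{Suc a..b}. \<bar>f i - f (i - 1)\<bar> \<le> V"
    and startup: "1 < a \<longrightarrow> f a \<le> Vb" and shutdown: "b < T \<longrightarrow> f b \<le> Vb"
  shows "on_block a b f \<in> P"
proof -
  define x where "x = (\<lambda>i. if i \<in> {a..b} then f i else 0)"
  define y :: "nat \<Rightarrow> real" where "y = indicator {a..b}"
  have up: "\<forall>t\<in>{2..T}. x t - x (t - 1) \<le> V * y (t - 1) + Vb * (1 - y (t - 1))"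
    and down: "\<forall>t\<in>{2..T}. x (t - 1) - x t \<le> V * y t + Vb * (1 - y t)"
    using on_block_ramp_limits[OF range ramp startup shutdown _ x_def y_def] by auto
  have "0 \<le> f i" if "i \<in> {a..b}" for i
    using bspec[OF range that] Cl_pos by linarith
  then have "(x, y) \<in> P"
    unfolding mem_Pset_iff
    using block range up down no_short_run_block[OF block(1,4)]
    by (auto simp: x_def y_def)
  then show ?thesis
    unfolding on_block_def x_def y_def .
qed

definition ramp :: "nat \<Rightarrow> real" where
  "ramp n = min Cu (Vb + real n * V)"

lemma ramp_bounds: "Cl \<le> ramp n" "ramp n \<le> Cu" "ramp 0 \<le> Vb"
proof -
  have "0 \<le> real n * V"
    using V_pos by simp
  then show "Cl \<le> ramp n" "ramp n \<le> Cu" "ramp 0 \<le> Vb"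
    using Cl_less_Cu Cl_le_Vb by (auto simp: ramp_def)
qed

lemma ramp_Suc: "\<bar>ramp (Suc n) - ramp n\<bar> \<le> V"
  using V_pos by (auto simp: ramp_def min_def algebra_simps)

lemma startup_in_P:
  assumes "2 \<le> j" "j \<le> T"
  shows "on_block j T (\<lambda>i. ramp (i - j)) \<in> P"
proof (rule on_block_in_P)
  show "\<forall>i\<in>{Suc j..T}. \<bar>ramp (i - j) - ramp (i - 1 - j)\<bar> \<le> V"
  proof
    fix i assume "i \<in> {Suc j..T}"
    then have "i - j = Suc (i - 1 - j)"
      by auto
    then show "\<bar>ramp (i - j) - ramp (i - 1 - j)\<bar> \<le> V"
      using ramp_Suc by simp
  qed
qed (use assms ramp_bounds in auto)

lemma shutdown_in_P:
  assumes "1 \<le> k" "k < T"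
  shows "on_block 1 k (\<lambda>i. ramp (k - i)) \<in> P"
proof (rule on_block_in_P)
  show "\<forall>i\<in>{Suc 1..k}. \<bar>ramp (k - i) - ramp (k - (i - 1))\<bar> \<le> V"
  proof
    fix i assume "i \<in> {Suc 1..k}"
    then have "k - (i - 1) = Suc (k - i)"
      by auto
    then show "\<bar>ramp (k - i) - ramp (k - (i - 1))\<bar> \<le> V"
      using ramp_Suc by (simp add: abs_minus_commute)
  qed
qed (use assms ramp_bounds in auto)

(* Small enough that Cu - dip is at least Cl and within ramping distance V of Cu. *)
definition dip :: real where
  "dip = min V (Cu - Cl)"

definition full_point :: point where
  "full_point = on_block 1 T (\<lambda>_. Cu)"

definition dip_point :: "nat \<Rightarrow> point" where
  "dip_point k = on_block 1 T (\<lambda>i. if i = k then Cu - dip else Cu)"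

lemma dip_pos: "0 < dip"
  using V_pos Cl_less_Cu by (simp add: dip_def)

lemma full_point_in_P: "full_point \<in> P"
  unfolding full_point_def using T_pos Cl_less_Cu V_pos by (intro on_block_in_P) auto

lemma dip_point_in_P: "dip_point k \<in> P"
  unfolding dip_point_def using T_pos Cl_less_Cu V_pos dip_pos
  by (intro on_block_in_P) (auto simp: dip_def)

lemma unit_x_eq: "k \<in> {1..T} \<Longrightarrow> unit_x k = (1 / dip) *\<^sub>R (full_point - dip_point k)"
  using dip_pos
  by (auto simp: unit_x_def full_point_def dip_point_def on_block_def indicator_def fun_eq_iff)

definition startup_ineq :: "nat set \<Rightarrow> nat \<Rightarrow> point \<Rightarrow> real" where
  "startup_ineq S t = (\<lambda>(x, y). x t -
     (Cu * y t - (\<Sum>s\<in>S. (Cu - Vb - real s * V) * (y (t - s) - y (t - s - 1)))))"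

definition shutdown_ineq :: "nat set \<Rightarrow> nat \<Rightarrow> point \<Rightarrow> real" where
  "shutdown_ineq S t = (\<lambda>(x, y). x t -
     (Cu * y t - (\<Sum>s\<in>S. (Cu - Vb - real s * V) * (y (t + s) - y (t + s + 1)))))"

lemma linear_startup_ineq: "linear (startup_ineq S t)"
proof (rule linearI)
  fix p q :: point
  show "startup_ineq S t (p + q) = startup_ineq S t p + startup_ineq S t q"
    by (cases p; cases q) (simp add: startup_ineq_def algebra_simps sum.distrib sum_subtractf)
next
  fix r :: real and p :: point
  show "startup_ineq S t (r *\<^sub>R p) = r *\<^sub>R startup_ineq S t p"
    by (cases p) (simp add: startup_ineq_def algebra_simps sum_distrib_left sum_subtractf)
qed

lemma x_le_ramp_after_startup:
  assumes p: "(x, y) \<in> P" and "2 \<le> a" "a + n \<le> T" "y (a - 1) = 0" "\<forall>i\<in>{a..<a + n}. y i = 1"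
  shows "x (a + n) \<le> Vb + real n * V"
  using assms(3,5)
proof (induction n)
  case 0
  have "x a - x (a - 1) \<le> V * y (a - 1) + Vb * (1 - y (a - 1))"
    using P_ramp_up[OF p] assms(2) 0 by simp
  moreover have "x (a - 1) \<le> Cu * y (a - 1)"
    by (rule P_capacity[OF p]) (use assms(2) 0 in auto)
  ultimately show ?case
    using assms(4) by simp
next
  case (Suc n)
  have "x (Suc (a + n)) - x (Suc (a + n) - 1)
      \<le> V * y (Suc (a + n) - 1) + Vb * (1 - y (Suc (a + n) - 1))"
    by (rule P_ramp_up[OF p]) (use assms(2) Suc.prems in auto)
  moreover have "y (a + n) = 1"
    using Suc.prems by simp
  ultimately show ?case
    using Suc by (simp add: algebra_simps)
qed

lemma after_startup:
  assumes p: "(x, y) \<in> P" and a: "2 \<le> a" "y (a - 1) = 0" "y a = 1"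
    and i: "a \<le> i" "i \<le> T" "i < a + L"
  shows "y i = 1" "x i \<le> Vb + real (i - a) * V"
proof -
  have on: "y j = 1" if "a \<le> j" "j \<le> i" for j
  proof (rule ccontr)
    assume "y j \<noteq> 1"
    then have "y j = 0" "j \<noteq> a"
      using P_binary[OF p, of j] a that i by auto
    then have "1 \<le> a - 1 \<and> a - 1 < a \<and> a < j \<and> j \<le> T \<and> j \<le> a - 1 + L \<and>
        y (a - 1) = 0 \<and> y a = 1 \<and> y j = 0"
      using a i that by auto
    then show False
      using P_no_short_run[OF p] unfolding no_short_run_def by blast
  qed
  then show "y i = 1"
    using i by simp
  have "x (a + (i - a)) \<le> Vb + real (i - a) * V"
    using on i a by (intro x_le_ramp_after_startup[OF p]) auto
  then show "x i \<le> Vb + real (i - a) * V"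
    using i by simp
qed

end

lemma sum_mult_le_single:
  fixes c D :: "'a \<Rightarrow> real"
  assumes "finite S" "s0 \<in> S" "\<forall>s\<in>S. 0 \<le> c s" "\<forall>s\<in>S - {s0}. D s \<le> 0"
  shows "(\<Sum>s\<in>S. c s * D s) \<le> c s0 * D s0"
proof -
  have "(\<Sum>s\<in>S - {s0}. c s * D s) \<le> 0"
    using assms(3,4) by (intro sum_nonpos) (simp add: mult_nonneg_nonpos)
  then show ?thesis
    using sum.remove[OF assms(1,2), of "\<lambda>s. c s * D s"] by simp
qed

locale startup_ineq_setting = unit_commitment +
  fixes S :: "nat set" and t :: nat
  assumes t_range: "t \<in> {1..T}" and finite_S: "finite S"
    and S_before: "\<forall>s\<in>S. s + 2 \<le> t \<and> s < L" and S_coeff: "\<forall>s\<in>S. Vb + real s * V \<le> Cu"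
begin

abbreviation face :: "point set" where
  "face \<equiv> {p\<in>P. startup_ineq S t p = 0}"

lemma startup_ineq_on_block:
  assumes "1 \<le> a" "a \<le> b"
  shows "startup_ineq S t (on_block a b f) = (if t \<in> {a..b} then f t - Cu else 0)
    + (if a \<le> t \<and> t - a \<in> S then Cu - Vb - real (t - a) * V else 0)
    - (if b < t \<and> t - Suc b \<in> S then Cu - Vb - real (t - Suc b) * V else 0)"
  using sum_indicator_jumps[OF finite_S _ assms, of t "\<lambda>s. Cu - Vb - real s * V"] S_before
  by (simp add: startup_ineq_def on_block_def)

lemma pred_notin_S: "t - 1 \<notin> S"
  using S_before t_range by force

lemma after_startup_in_S:
  assumes p: "(x, y) \<in> P" and s: "s \<in> S" "y (t - s - 1) = 0" "y (t - s) = 1"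
    and i: "t - s \<le> i" "i \<le> t"
  shows "y i = 1" "x i \<le> Vb + real (i - (t - s)) * V"
proof -
  have "2 \<le> t - s" "i \<le> T" "i < t - s + L"
    using s(1) i S_before t_range by auto
  then show "y i = 1" "x i \<le> Vb + real (i - (t - s)) * V"
    using after_startup[OF p _ s(2,3) i(1)] by blast+
qed

lemma startup_in_S_unique:
  assumes p: "(x, y) \<in> P" and "s \<in> S" "y (t - s - 1) = 0" "y (t - s) = 1"
    and "s' \<in> S" "y (t - s' - 1) = 0" "y (t - s') = 1"
  shows "s' = s"
proof (rule ccontr)
  assume "s' \<noteq> s"
  then consider "s < s'" | "s' < s"
    by linarith
  then show False
    by cases (use after_startup_in_S(1)[OF p assms(5-7), of "t - s - 1"]
        after_startup_in_S(1)[OF p assms(2-4), of "t - s' - 1"] assms S_before in auto)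
qed

lemma startup_ineq_valid:
  assumes "p \<in> P"
  shows "startup_ineq S t p \<le> 0"
proof -
  obtain x y where p: "(x, y) \<in> P" "p = (x, y)"
    using assms by (cases p) auto
  define c where "c s = Cu - Vb - real s * V" for s
  define D where "D s = y (t - s) - y (t - s - 1)" for s
  define startup where "startup s \<longleftrightarrow> y (t - s - 1) = 0 \<and> y (t - s) = 1" for s
  have c_nonneg: "\<forall>s\<in>S. 0 \<le> c s"
    using S_coeff unfolding c_def by auto
  have D_cases: "D s \<le> 0 \<or> startup s" if "s \<in> S" for s
    using P_binary[OF p(1), of "t - s"] P_binary[OF p(1), of "t - s - 1"] S_before t_range that
    unfolding D_def startup_def by force
  have "x t - Cu * y t + (\<Sum>s\<in>S. c s * D s) \<le> 0"
  proof (cases "\<exists>s0\<in>S. startup s0")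
    case True
    then obtain s0 where s0: "s0 \<in> S" "y (t - s0 - 1) = 0" "y (t - s0) = 1"
      unfolding startup_def by blast
    have "\<forall>s\<in>S - {s0}. D s \<le> 0"
      using D_cases startup_in_S_unique[OF p(1) s0] unfolding startup_def by blast
    then have "(\<Sum>s\<in>S. c s * D s) \<le> c s0 * D s0"
      by (rule sum_mult_le_single[OF finite_S s0(1) c_nonneg])
    moreover have "y t = 1" "x t \<le> Vb + real s0 * V"
      using after_startup_in_S[OF p(1) s0, of t] s0(1) S_before by auto
    ultimately show ?thesis
      using s0(2,3) unfolding D_def c_def by simp
  next
    case False
    then have "(\<Sum>s\<in>S. c s * D s) \<le> 0"
      using D_cases c_nonneg by (intro sum_nonpos) (auto simp: mult_nonneg_nonpos)
    then show ?thesis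
      using P_capacity[OF p(1) t_range] by simp
  qed
  then show ?thesis
    unfolding p(2) startup_ineq_def c_def D_def by simp
qed

lemma full_point_in_face: "full_point \<in> face"
  using full_point_in_P startup_ineq_on_block[of 1 T] t_range pred_notin_S
  by (auto simp: full_point_def)

lemma dip_point_in_face: "k \<noteq> t \<Longrightarrow> dip_point k \<in> face"
  using dip_point_in_P startup_ineq_on_block[of 1 T] t_range pred_notin_S
  by (auto simp: dip_point_def)

lemma startup_ineq_dip_point: "startup_ineq S t (dip_point t) = - dip"
  using startup_ineq_on_block[of 1 T] t_range pred_notin_S by (simp add: dip_point_def)

lemma startup_in_face:
  assumes "2 \<le> j" "j \<le> T" "t < j \<or> t - j \<in> S"
  shows "on_block j T (\<lambda>i. ramp (i - j)) \<in> face"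
proof -
  have "ramp (t - j) = Vb + real (t - j) * V" if "t - j \<in> S"
    using S_coeff that by (auto simp: ramp_def)
  then show ?thesis
    using startup_in_P assms startup_ineq_on_block[of j T] t_range by auto
qed

lemma shutdown_in_face:
  assumes "2 \<le> j" "j \<le> t" "t - j \<notin> S"
  shows "on_block 1 (j - 1) (\<lambda>i. ramp (j - 1 - i)) \<in> face"
  using shutdown_in_P[of "j - 1"] assms startup_ineq_on_block[of 1 "j - 1"] t_range pred_notin_S
  by auto

abbreviation face_span :: "point set" where
  "face_span \<equiv> span (insert (dip_point t) face)"

lemma face_subset_face_span: "face \<subseteq> face_span"
  by (auto intro: span_base)

lemma unit_x_in_face_span:
  assumes "k \<in> {1..T}"
  shows "unit_x k \<in> face_span"
proof -
  have "dip_point k \<in> face_span"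
    using dip_point_in_face[of k] face_subset_face_span by (cases "k = t") (auto intro: span_base)
  moreover have "full_point \<in> face_span"
    using full_point_in_face face_subset_face_span by blast
  ultimately show ?thesis
    using assms by (simp add: unit_x_eq span_diff span_scale)
qed

lemma face_y_part_in_face_span: "(x, y) \<in> face \<Longrightarrow> (0, y) \<in> face_span"
  using P_y_part_in_span face_subset_face_span unit_x_in_face_span by blast

(* (0, indicator {j..T}) is the y-part of the start-up trajectory at j if that lies on the face,
   and otherwise the complement of the y-part of the shut-down trajectory ending at j - 1. *)
lemma tail_in_face_span:
  assumes j: "1 \<le> j" "j \<le> Suc T"
  shows "(0, indicator {j..T}) \<in> face_span"
proof -
  have all_on: "(0, indicator {1..T}) \<in> face_span"
    using face_y_part_in_face_span full_point_in_face unfolding full_point_def on_block_def by blast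
  consider "j = 1" | "j = Suc T" | "2 \<le> j" "j \<le> T" "t < j \<or> t - j \<in> S"
    | "2 \<le> j" "j \<le> t" "t - j \<notin> S"
    using j t_range by linarith
  then show ?thesis
  proof cases
    case 2
    then have "(0, indicator {j..T}) = (0 :: point)"
      by (simp add: zero_prod_def fun_eq_iff)
    then show ?thesis
      by (simp add: span_zero)
  next
    case 3
    then show ?thesis
      using face_y_part_in_face_span startup_in_face unfolding on_block_def by blast
  next
    case 4
    then have "(0, indicator {1..j - 1}) \<in> face_span"
      using face_y_part_in_face_span shutdown_in_face unfolding on_block_def by blast
    with all_on have "(0, indicator {1..T}) - (0, indicator {1..j - 1}) \<in> face_span"
      by (rule span_diff)
    moreover have "(0, indicator {1..T}) - (0, indicator {1..j - 1})
        = ((0, indicator {j..T}) :: point)"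
      using 4 t_range by (auto simp: indicator_def fun_eq_iff)
    ultimately show ?thesis
      by simp
  qed (use all_on in simp)
qed

lemma P_subset_face_span: "P \<subseteq> face_span"
  using unit_x_in_face_span unit_y_in_span[OF tail_in_face_span] by (intro P_subset_span) auto

lemma startup_ineq_facet: "facet_defining (convex hull P) (startup_ineq S t)"
proof (rule facet_defining_convex_hullI[OF linear_startup_ineq _ zero_in_P dip_point_in_P _ _
      P_subset_span_units P_subset_face_span])
  show "startup_ineq S t (dip_point t) \<noteq> 0"
    using startup_ineq_dip_point dip_pos by simp
qed (use startup_ineq_valid in auto)

end

context unit_commitment
begin

lemma shutdown_ineq_eq_mirror:
  assumes "t \<in> {1..T}" "\<forall>s\<in>S. t + s + 1 \<le> T"
  shows "shutdown_ineq S t = startup_ineq S (Suc T - t) \<circ> mirror_point T"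
proof
  fix p :: point
  obtain x y where p: "p = (x, y)"
    by fastforce
  have "mirror T (Suc T - t) = t"
    using assms(1) unfolding mirror_def by auto
  moreover have "mirror T (Suc T - t - s) = t + s" "mirror T (Suc T - t - s - 1) = t + s + 1"
    if "s \<in> S" for s
    using assms that by (auto simp: mirror_def)
  ultimately show "shutdown_ineq S t p = (startup_ineq S (Suc T - t) \<circ> mirror_point T) p"
    unfolding p shutdown_ineq_def startup_ineq_def mirror_point_def by (simp cong: sum.cong)
qed

lemma mirror_point_image_face:
  "mirror_point T ` {p\<in>P. g p = 0} = {p\<in>P. (g \<circ> mirror_point T) p = 0}"
proof
  show "mirror_point T ` {p\<in>P. g p = 0} \<subseteq> {p\<in>P. (g \<circ> mirror_point T) p = 0}"
    using mirror_point_in_Pset by auto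
  show "{p\<in>P. (g \<circ> mirror_point T) p = 0} \<subseteq> mirror_point T ` {p\<in>P. g p = 0}"
  proof
    fix p assume "p \<in> {p\<in>P. (g \<circ> mirror_point T) p = 0}"
    then have "mirror_point T p \<in> {p\<in>P. g p = 0}"
      using mirror_point_in_Pset by auto
    then show "p \<in> mirror_point T ` {p\<in>P. g p = 0}"
      by (rule image_eqI[rotated]) simp
  qed
qed

lemma shutdown_ineq_facet:
  assumes t: "t \<in> {1..T}" and S: "finite S" "\<forall>s\<in>S. t + s + 1 \<le> T \<and> s < L"
    "\<forall>s\<in>S. Vb + real s * V \<le> Cu"
  shows "facet_defining (convex hull P) (shutdown_ineq S t)"
proof -
  interpret startup: startup_ineq_setting T L l Cu Cl V Vb S "Suc T - t"
    using t S by unfold_locales auto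
  let ?g = "startup_ineq S (Suc T - t)" and ?m = "mirror_point T"
  have "?m ` P \<subseteq> ?m ` span (insert (dip_point (Suc T - t)) {p\<in>P. ?g p = 0})"
    using startup.P_subset_face_span by (rule image_mono)
  then have spanning: "P \<subseteq> span (insert (?m (dip_point (Suc T - t))) {p\<in>P. (?g \<circ> ?m) p = 0})"
    unfolding mirror_point_image_Pset span_linear_image[OF linear_mirror_point, symmetric]
      image_insert mirror_point_image_face .
  have "facet_defining (convex hull P) (?g \<circ> ?m)"
  proof (rule facet_defining_convex_hullI[OF _ _ zero_in_P _ _ _ P_subset_span_units spanning])
    show "linear (?g \<circ> ?m)"
      using linear_mirror_point linear_startup_ineq by (rule linear_compose)
    show "?m (dip_point (Suc T - t)) \<in> P"
      using dip_point_in_P by (rule mirror_point_in_Pset)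
    show "(?g \<circ> ?m) (?m (dip_point (Suc T - t))) \<noteq> 0"
      using startup.startup_ineq_dip_point dip_pos by simp
  qed (use startup.startup_ineq_valid mirror_point_in_Pset in auto)
  then show ?thesis
    using shutdown_ineq_eq_mirror[OF t] S(2) by simp
qed

end

theorem proposition1:
  fixes T L l :: nat and Cu Cl V Vb :: real and S :: "nat set"
  assumes "T > 0" "L > 0" "l > 0"
    and "Cu > Cl" "Cl > 0" "V > 0" "Vb + V \<le> Cu" "Cl < Vb" "Vb < Cl + V"
    and S: "\<forall>s\<in>S. int s \<le> int L - 1 \<and> int s \<le> int T - 2 \<and> int s \<le> \<lfloor>(Cu - Vb) / V\<rfloor>"
  shows
    "(\<forall>t\<in>{1..T}. (\<forall>s\<in>S. t \<ge> s + 2) \<longrightarrow>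
        facet_defining (convex hull (Pset T L l Cu Cl V Vb))
          (\<lambda>(x, y). x t - (Cu * y t - (\<Sum>s\<in>S. (Cu - Vb - real s * V) * (y (t - s) - y (t - s - 1))))))
     \<and> (\<forall>t\<in>{1..T}. (\<forall>s\<in>S. t + s + 1 \<le> T) \<longrightarrow>
        facet_defining (convex hull (Pset T L l Cu Cl V Vb))
          (\<lambda>(x, y). x t - (Cu * y t - (\<Sum>s\<in>S. (Cu - Vb - real s * V) * (y (t + s) - y (t + s + 1))))))"
proof -
  interpret unit_commitment T L l Cu Cl V Vb
    using assms by unfold_locales auto
  have "finite S"
    using S by (intro finite_subset[of S "{..L}"]) auto
  have S_bounds: "\<forall>s\<in>S. s < L \<and> Vb + real s * V \<le> Cu"
    using S \<open>V > 0\<close> by (auto simp: le_floor_iff pos_le_divide_eq)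
  show ?thesis
  proof (intro conjI ballI impI)
    fix t assume "t \<in> {1..T}" "\<forall>s\<in>S. s + 2 \<le> t"
    then interpret startup_ineq_setting T L l Cu Cl V Vb S t
      using \<open>finite S\<close> S_bounds by unfold_locales auto
    show "facet_defining (convex hull P) (\<lambda>(x, y). x t -
        (Cu * y t - (\<Sum>s\<in>S. (Cu - Vb - real s * V) * (y (t - s) - y (t - s - 1)))))"
      using startup_ineq_facet unfolding startup_ineq_def .
  next
    fix t assume "t \<in> {1..T}" "\<forall>s\<in>S. t + s + 1 \<le> T"
    then show "facet_defining (convex hull P) (\<lambda>(x, y). x t -
        (Cu * y t - (\<Sum>s\<in>S. (Cu - Vb - real s * V) * (y (t + s) - y (t + s + 1)))))"
      using shutdown_ineq_facet[OF _ \<open>finite S\<close>] S_bounds unfolding shutdown_ineq_def by auto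
  qed
qed

end
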